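(* Let $n\ge3$ and $k\ge2$ be integers, and let $A=\mathrm{pdiag}(a_1,\dots,a_n)$ with $0\le a_1\le\dots\le a_n$. If there exists $i$ with $2\le i\le n-1$ such that $$a_i>\frac{\max\{(k-2)a_n,\ k a_1\}}{k-1},$$ then $D=A^k$ (which has the $k$-th root $A$) does not satisfy the root condition; that is, there exist $i',j',t\in[n]$ with $D_{i'j'}+D_{tt}<D_{i't}+D_{tj'}$.
   Context: Max-plus conventions: $\oplus=\max$, $\otimes=+$; $(A\otimes B)_{ij}=\max_t(A_{it}+B_{tj})$, $A^k$ is the $k$-fold max-plus power. $\mathrm{pdiag}(a_1,\dots,a_n)$ is the matrix with real diagonal entries $a_1,\dots,a_n$ and all off-diagonal entries equal to the real number $0$. A finite matrix $M\in\mathbb{R}^{n\times n}$ satisfies the root condition if $M_{ij}+M_{tt}\ge M_{it}+M_{tj}$ for all $i,j,t\in[n]$. *)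

theory Defs
  imports Main "HOL.Real"
begin

text \<open>Square real matrices of size n are represented as functions nat => nat => real,
  with indices ranging over [n] = {1..n}; entries outside are irrelevant.\<close>

definition mp_mult :: "nat \<Rightarrow> (nat \<Rightarrow> nat \<Rightarrow> real) \<Rightarrow> (nat \<Rightarrow> nat \<Rightarrow> real) \<Rightarrow> (nat \<Rightarrow> nat \<Rightarrow> real)" where
  "mp_mult n A B = (\<lambda>i j. Max ((\<lambda>t. A i t + B t j) ` {1..n}))"

fun mp_pow :: "nat \<Rightarrow> (nat \<Rightarrow> nat \<Rightarrow> real) \<Rightarrow> nat \<Rightarrow> (nat \<Rightarrow> nat \<Rightarrow> real)" where
  "mp_pow n A 0 = A"
| "mp_pow n A (Suc 0) = A"
| "mp_pow n A (Suc (Suc k)) = mp_mult n (mp_pow n A (Suc k)) A"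

definition pdiag :: "(nat \<Rightarrow> real) \<Rightarrow> (nat \<Rightarrow> nat \<Rightarrow> real)" where
  "pdiag a = (\<lambda>i j. if i = j then a i else 0)"

definition root_condition :: "nat \<Rightarrow> (nat \<Rightarrow> nat \<Rightarrow> real) \<Rightarrow> bool" where
  "root_condition n M = (\<forall>i\<in>{1..n}. \<forall>j\<in>{1..n}. \<forall>t\<in>{1..n}. M i j + M t t \<ge> M i t + M t j)"

end

theory Submission
  imports Defs
begin

text \<open>Entry (i,j) of \<open>pdiag a\<close> to the max-plus power k is the largest weight of a walk of
  length k from i to j in which every loop at t weighs \<open>a t\<close> and every other step weighs 0.
  With \<open>a\<close> bounded by \<open>a n\<close>, a diagonal entry is at most \<open>max (k a\<^sub>i) ((k-2) a\<^sub>n)\<close> and an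
  off-diagonal one at most \<open>(k-1) a\<^sub>n\<close>, while \<open>D i 1 \<ge> (k-1) a\<^sub>i\<close> and \<open>D 1 n \<ge> (k-1) a\<^sub>n\<close>.
  The hypothesis on \<open>a\<^sub>i\<close> thus makes \<open>D 1 1 < D i 1\<close>, and the root condition fails at
  \<open>(i, n, 1)\<close>.\<close>

lemma mp_mult_ge:
  assumes "t \<in> {1..n}"
  shows "A i t + B t j \<le> mp_mult n A B i j"
  using assms unfolding mp_mult_def by (intro Max_ge) auto

lemma mp_mult_le:
  assumes "1 \<le> n" and "\<And>t. t \<in> {1..n} \<Longrightarrow> A i t + B t j \<le> c"
  shows "mp_mult n A B i j \<le> c"
  using assms unfolding mp_mult_def by (subst Max_le_iff) auto

lemma pdiag_pow_diag_ge:
  assumes "i \<in> {1..n}"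
  shows "real (Suc m) * a i \<le> mp_pow n (pdiag a) (Suc m) i i"
proof (induction m)
  case 0
  then show ?case by (simp add: pdiag_def)
next
  case (Suc m)
  have "mp_pow n (pdiag a) (Suc m) i i + pdiag a i i \<le> mp_pow n (pdiag a) (Suc (Suc m)) i i"
    using mp_mult_ge[OF assms] by simp
  with Suc.IH show ?case by (simp add: pdiag_def algebra_simps)
qed

lemma pdiag_pow_offdiag_ge_row:
  assumes "i \<in> {1..n}" and "i \<noteq> j"
  shows "real m * a i \<le> mp_pow n (pdiag a) (Suc m) i j"
proof (cases m)
  case 0
  then show ?thesis using assms by (simp add: pdiag_def)
next
  case (Suc m')
  have "mp_pow n (pdiag a) (Suc m') i i + pdiag a i j \<le> mp_pow n (pdiag a) (Suc (Suc m')) i j"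
    using mp_mult_ge[OF assms(1)] by simp
  then show ?thesis
    using pdiag_pow_diag_ge[OF assms(1), of m' a] assms(2) Suc by (simp add: pdiag_def)
qed

lemma pdiag_pow_offdiag_ge_col:
  assumes "j \<in> {1..n}" and "i \<noteq> j"
  shows "real m * a j \<le> mp_pow n (pdiag a) (Suc m) i j"
proof (induction m)
  case 0
  then show ?case using assms by (simp add: pdiag_def)
next
  case (Suc m)
  have "mp_pow n (pdiag a) (Suc m) i j + pdiag a j j \<le> mp_pow n (pdiag a) (Suc (Suc m)) i j"
    using mp_mult_ge[OF assms(1)] by simp
  with Suc.IH show ?case by (simp add: pdiag_def algebra_simps)
qed

lemma pdiag_pow_le:
  fixes a :: "nat \<Rightarrow> real"
  assumes "1 \<le> n" and "0 \<le> M" and bound: "\<And>t. t \<in> {1..n} \<Longrightarrow> a t \<le> M"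
    and "i \<in> {1..n}"
  shows "mp_pow n (pdiag a) (Suc m) i j
    \<le> (if i = j then max (real (Suc m) * a i) ((real m - 1) * M) else real m * M)"
proof (induction m arbitrary: j)
  case 0
  then show ?case by (simp add: pdiag_def)
next
  case (Suc m)
  let ?P = "mp_pow n (pdiag a) (Suc m)"
  have aiM: "a i \<le> M" using bound assms(4) .
  have off: "?P i t \<le> real m * M" if "t \<noteq> i" for t
    using Suc.IH[of t] that by simp
  have diag: "?P i i \<le> max (real (Suc m) * a i) ((real m - 1) * M)"
    using Suc.IH[of i] by simp
  have diag_weak: "?P i i \<le> real (Suc m) * M"
  proof -
    have "real (Suc m) * a i \<le> real (Suc m) * M" using aiM by (simp add: mult_left_mono)
    moreover have "(real m - 1) * M \<le> real (Suc m) * M" using assms(2) by (simp add: mult_right_mono)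
    ultimately show ?thesis using diag by linarith
  qed
  show ?case
  proof (cases "i = j")
    case True
    have "?P i t + pdiag a t i \<le> max (real (Suc (Suc m)) * a i) ((real (Suc m) - 1) * M)"
      if "t \<in> {1..n}" for t
    proof (cases "t = i")
      case True
      then show ?thesis using diag aiM by (auto simp: pdiag_def algebra_simps)
    next
      case False
      then show ?thesis using off[of t] by (simp add: pdiag_def)
    qed
    then have "mp_mult n ?P (pdiag a) i i
        \<le> max (real (Suc (Suc m)) * a i) ((real (Suc m) - 1) * M)"
      by (rule mp_mult_le[OF assms(1)])
    with True show ?thesis by simp
  next
    case False
    have "?P i t + pdiag a t j \<le> real (Suc m) * M" if "t \<in> {1..n}" for t
    proof (cases "t = j")
      case True
      then show ?thesis using off[of j] bound[OF that] False by (simp add: pdiag_def algebra_simps)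
    next
      case False
      then show ?thesis
        using off[of t] diag_weak assms(2) by (cases "t = i") (auto simp: pdiag_def algebra_simps)
    qed
    with False show ?thesis using mp_mult_le[OF assms(1)] by simp
  qed
qed

theorem proposition4p11:
  fixes n k :: nat and a :: "nat \<Rightarrow> real"
  assumes "n \<ge> 3" and "k \<ge> 2"
    and "0 \<le> a 1"
    and "\<And>i j. 1 \<le> i \<Longrightarrow> i \<le> j \<Longrightarrow> j \<le> n \<Longrightarrow> a i \<le> a j"
    and "\<exists>i. 2 \<le> i \<and> i \<le> n - 1 \<and>
           a i > max ((real k - 2) * a n) (real k * a 1) / (real k - 1)"
  shows "\<not> root_condition n (mp_pow n (pdiag a) k) \<and>
         (\<exists>i'\<in>{1..n}. \<exists>j'\<in>{1..n}. \<exists>t\<in>{1..n}.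
            mp_pow n (pdiag a) k i' j' + mp_pow n (pdiag a) k t t
              < mp_pow n (pdiag a) k i' t + mp_pow n (pdiag a) k t j')"
proof -
  obtain i where i: "2 \<le> i" "i \<le> n - 1"
    and ai: "a i > max ((real k - 2) * a n) (real k * a 1) / (real k - 1)"
    using assms(5) by blast
  obtain m where m: "k = Suc m" "1 \<le> m" using assms(2) by (cases k) auto
  let ?D = "mp_pow n (pdiag a) k"
  have idx: "i \<in> {1..n}" "1 \<in> {1..n}" "n \<in> {1..n}" "i \<noteq> n" "i \<noteq> 1" "1 \<noteq> n"
    using i assms(1) by auto
  have bound: "\<And>t. t \<in> {1..n} \<Longrightarrow> a t \<le> a n"
    using assms(4)[of _ n] by auto
  have "0 \<le> a n" using assms(3) bound[of 1] idx by simp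
  note upper = pdiag_pow_le[where n=n and a=a and M="a n" and m=m, OF _ \<open>0 \<le> a n\<close> bound]
  have "?D i n \<le> real m * a n" using upper[where i=i and j=n] idx m by simp
  moreover have "real m * a n \<le> ?D 1 n"
    using pdiag_pow_offdiag_ge_col[where j=n and i=1 and m=m and a=a] idx m by simp
  moreover have "?D 1 1 \<le> max (real k * a 1) ((real m - 1) * a n)"
    using upper[where i=1 and j=1] idx m by simp
  moreover have "max ((real m - 1) * a n) (real k * a 1) < real m * a i"
    using ai m by (simp add: pos_divide_less_eq mult.commute)
  moreover have "real m * a i \<le> ?D i 1"
    using pdiag_pow_offdiag_ge_row[where i=i and j=1 and m=m and a=a] idx m by simp
  ultimately have "?D i n + ?D 1 1 < ?D i 1 + ?D 1 n" by linarith
  then show ?thesis using idx unfolding root_condition_def by (metis not_le)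
qed

end
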